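(* Consider the agents $$\dot x_i=\sum_{j=1}^N\alpha_{ij}(t)(y_j-y_i),\qquad y_i=\mathrm{sat}(x_i),\qquad i\in\mathcal V=\{1,\dots,N\},$$ with a common saturation level $s>0$ (homogeneous agents), and time-varying undirected weights satisfying the standing assumptions below. Then for every $i\in\mathcal V$ there exists $x_i^*$ with $\lim_{t\to\infty}x_i(t)=x_i^*$, and $x_i^*\in[\min_{j\in\mathcal V}x_j(t_0),\ \max_{j\in\mathcal V}x_j(t_0)]$.
   Context: $\mathrm{sat}(x)=\mathrm{sign}(x)\min\{|x|,s\}$. Standing assumptions on the time-varying graph: $\alpha_{ij}(t)=\alpha_{ji}(t)\ge0$ for all $t\ge0$, and each $\alpha_{ij}$ is continuous on $[0,\infty)$ except on a set of measure zero; solutions are Carathéodory solutions, i.e. absolutely continuous functions satisfying $x_i(t)=x_i(t_0)+\int_{t_0}^t\sum_j\alpha_{ij}(\tau)(y_j(\tau)-y_i(\tau))\,d\tau$. *)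

theory Defs
  imports "HOL-Analysis.Analysis"
begin

definition sat :: "real \<Rightarrow> real \<Rightarrow> real" where
  "sat s x = sgn x * min \<bar>x\<bar> s"

end

theory Submission
  imports Defs
begin

text \<open>Convex potentials \<open>\<Sum>i. \<phi> (x i)\<close> are nonincreasing along the flow: by symmetry of the
  weights, \<open>\<Sum>i. \<phi>' (x i) * x\<^sub>i' = - 1/2 * \<Sum>i j. \<alpha> i j * (\<phi>' (x i) - \<phi>' (x j)) * (sat (x i) - sat (x j)) \<le> 0\<close>.
  For \<open>\<phi> = id\<close> this conserves \<open>\<Sum>i. x i\<close>; for the positive parts \<open>(x - c)\<^sup>+\<close> and \<open>(c - x)\<^sup>+\<close> it
  yields the bounds \<open>Min \<le> x i t \<le> Max\<close> and the convergence of every excess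
  \<open>E c t = \<Sum>j. (x j t - c)\<^sup>+\<close> to a limit \<open>L c\<close>. An agent oscillating between levels \<open>p < q\<close>
  would cross, at arbitrarily late times, a level \<open>c\<close> where a second difference of \<open>L\<close> is
  small, while each such crossing contributes a full step to the second difference of \<open>E \<cdot> t\<close>.\<close>

lemma sat_mono: "s \<ge> 0 \<Longrightarrow> u \<le> v \<Longrightarrow> sat s u \<le> sat s v"
  by (auto simp: sat_def sgn_if min_def)

lemma sum_mult_symmetric_diffusion_nonpos:
  fixes a :: "'i \<Rightarrow> 'i \<Rightarrow> real" and D Y :: "'i \<Rightarrow> real"
  assumes "finite I"
    and sym: "\<And>i j. i \<in> I \<Longrightarrow> j \<in> I \<Longrightarrow> a i j = a j i \<and> a i j \<ge> 0"
    and comono: "\<And>i j. i \<in> I \<Longrightarrow> j \<in> I \<Longrightarrow> (D i - D j) * (Y i - Y j) \<ge> 0"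
  shows "(\<Sum>i\<in>I. D i * (\<Sum>j\<in>I. a i j * (Y j - Y i))) \<le> 0"
proof -
  let ?S = "\<Sum>i\<in>I. \<Sum>j\<in>I. a i j * D i * (Y j - Y i)"
  have lhs: "(\<Sum>i\<in>I. D i * (\<Sum>j\<in>I. a i j * (Y j - Y i))) = ?S"
    by (simp add: sum_distrib_left algebra_simps)
  have "?S = (\<Sum>j\<in>I. \<Sum>i\<in>I. a i j * D i * (Y j - Y i))"
    by (rule sum.swap)
  also have "\<dots> = (\<Sum>i\<in>I. \<Sum>j\<in>I. a i j * D j * (Y i - Y j))"
    using sym by (intro sum.cong refl) auto
  finally have "2 * ?S = (\<Sum>i\<in>I. \<Sum>j\<in>I. a i j * D i * (Y j - Y i) + a i j * D j * (Y i - Y j))"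
    by (simp add: sum.distrib)
  also have "\<dots> = (\<Sum>i\<in>I. \<Sum>j\<in>I. - (a i j * ((D i - D j) * (Y i - Y j))))"
    by (intro sum.cong refl) (simp add: algebra_simps)
  also have "\<dots> \<le> 0"
    using sym comono by (intro sum_nonpos) simp
  finally show ?thesis
    using lhs by simp
qed

text \<open>Huber smoothing of \<open>max z 0\<close> at scale \<open>e\<close>: unlike the positive part itself, it has a
  Lipschitz slope.\<close>
definition smooth_pos :: "real \<Rightarrow> real \<Rightarrow> real" where
  "smooth_pos e z = (if z \<le> 0 then 0 else if z \<le> e then z\<^sup>2 / (2 * e) else z - e / 2)"

definition smooth_pos_slope :: "real \<Rightarrow> real \<Rightarrow> real" where
  "smooth_pos_slope e z = (if z \<le> 0 then 0 else if z \<le> e then z / e else 1)"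

lemma smooth_pos_slope_mono: "e > 0 \<Longrightarrow> u \<le> v \<Longrightarrow> smooth_pos_slope e u \<le> smooth_pos_slope e v"
  by (auto simp: smooth_pos_slope_def divide_simps)

lemma smooth_pos_slope_lipschitz:
  "e > 0 \<Longrightarrow> \<bar>smooth_pos_slope e u - smooth_pos_slope e v\<bar> \<le> 1 / e * \<bar>u - v\<bar>"
  by (auto simp: smooth_pos_slope_def divide_simps abs_if)

lemma smooth_pos_le_tangent:
  assumes "e > 0"
  shows "smooth_pos e v - smooth_pos e u \<le> smooth_pos_slope e v * (v - u)"
proof -
  consider "v \<le> 0" | "0 < v" "v \<le> e" | "e < v" by linarith
  then consider "v \<le> 0" "u \<le> e" | "v \<le> 0" "e < u"
    | "0 < v" "v \<le> e" "u \<le> 0" | "0 < v" "v \<le> e" "0 < u" "u \<le> e" | "0 < v" "v \<le> e" "e < u"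
    | "e < v" "u \<le> 0" | "e < v" "0 < u" "u \<le> e" | "e < v" "e < u"
    by linarith
  then show ?thesis
  proof cases
    case 4
    have "u * (v * 2) \<le> u * u + v * v"
      using zero_le_square[of "v - u"] by (simp add: algebra_simps)
    then have "e * (u * (v * 2)) \<le> e * (u * u + v * v)"
      using assms by (intro mult_left_mono) auto
    then show ?thesis
      using 4 assms by (simp add: smooth_pos_def smooth_pos_slope_def divide_simps power2_eq_square algebra_simps)
  next
    case 5
    have "0 \<le> e * ((e - v) * (2 * u - v - e))"
      using 5 by (intro mult_nonneg_nonneg) auto
    then show ?thesis
      using 5 assms by (simp add: smooth_pos_def smooth_pos_slope_def divide_simps power2_eq_square algebra_simps)
  next
    case 7
    have "0 \<le> (e - u) * (e - u)" by simp
    then show ?thesis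
      using 7 assms by (simp add: smooth_pos_def smooth_pos_slope_def divide_simps power2_eq_square algebra_simps)
  qed (use assms in \<open>auto simp: smooth_pos_def smooth_pos_slope_def divide_simps power2_eq_square\<close>)
qed

lemma smooth_pos_approx:
  assumes "e > 0"
  shows "smooth_pos e z \<le> max z 0" and "max z 0 \<le> smooth_pos e z + e / 2"
proof -
  consider "z \<le> 0" | "0 < z" "z \<le> e" | "e < z" by linarith
  then have "smooth_pos e z \<le> max z 0 \<and> max z 0 \<le> smooth_pos e z + e / 2"
  proof cases
    case 2
    have "z * z \<le> e * z" "0 \<le> (e - z) * (e - z)"
      using 2 by (simp_all add: mult_right_mono)
    then show ?thesis
      using 2 assms by (simp add: smooth_pos_def divide_simps power2_eq_square algebra_simps)
  qed (use assms in \<open>auto simp: smooth_pos_def\<close>)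
  then show "smooth_pos e z \<le> max z 0" and "max z 0 \<le> smooth_pos e z + e / 2"
    by auto
qed

lemma pos_part_second_difference_nonneg:
  "(h::real) \<ge> 0 \<Longrightarrow> 2 * max (z - c) 0 \<le> max (z - (c - h)) 0 + max (z - (c + h)) 0"
  by (auto simp: max_def)

text \<open>Halving the \<open>w\<close>-mass of \<open>[a, b]\<close> halves the sum of the squared masses, so the
  increments of \<open>h\<close> over \<open>2\<^sup>n\<close> pieces of equal mass add up to at most \<open>C \<mu>\<^sup>2 / 2\<^sup>n\<close>.\<close>
lemma antimono_if_increment_le_sq_integral:
  fixes h w :: "real \<Rightarrow> real"
  assumes w_integrable: "\<And>a b. t0 \<le> a \<Longrightarrow> a \<le> b \<Longrightarrow> w integrable_on {a..b}"
    and w_nonneg: "\<And>t. w t \<ge> 0" and "C \<ge> 0"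
    and increment: "\<And>a b. t0 \<le> a \<Longrightarrow> a \<le> b \<Longrightarrow> h b - h a \<le> C * (integral {a..b} w)\<^sup>2"
    and "t0 \<le> a" "a \<le> b"
  shows "h b \<le> h a"
proof -
  have dyadic: "h b - h a \<le> C * (integral {a..b} w)\<^sup>2 / 2 ^ n" if "t0 \<le> a" "a \<le> b" for n a b
    using that
  proof (induction n arbitrary: a b)
    case 0
    then show ?case using increment by simp
  next
    case (Suc n)
    let ?\<mu> = "integral {a..b} w"
    have "continuous_on {a..b} (\<lambda>m. integral {a..m} w)"
      using w_integrable Suc.prems by (intro indefinite_integral_continuous_1) auto
    moreover have "?\<mu> \<ge> 0"
      using w_integrable[OF Suc.prems] w_nonneg by (intro integral_nonneg) auto
    ultimately obtain m where m: "a \<le> m" "m \<le> b" "integral {a..m} w = ?\<mu> / 2"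
      using Suc.prems IVT'[of "\<lambda>m. integral {a..m} w" a "?\<mu> / 2" b] by auto
    have "integral {a..m} w + integral {m..b} w = ?\<mu>"
      using Henstock_Kurzweil_Integration.integral_combine[OF m(1,2) w_integrable[OF Suc.prems]] .
    then have "integral {m..b} w = ?\<mu> / 2"
      using m by simp
    then have "h b - h m \<le> C * (?\<mu> / 2)\<^sup>2 / 2 ^ n"
      using Suc.IH[of m b] m Suc.prems by (simp only:)
    moreover have "h m - h a \<le> C * (?\<mu> / 2)\<^sup>2 / 2 ^ n"
      using Suc.IH[of a m] m Suc.prems by (simp only:)
    ultimately have "h b - h a \<le> 2 * (C * (?\<mu> / 2)\<^sup>2 / 2 ^ n)"
      by simp
    also have "\<dots> = C * ?\<mu>\<^sup>2 / 2 ^ Suc n"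
      by (simp add: power2_eq_square field_simps)
    finally show ?case .
  qed
  show ?thesis
  proof (rule ccontr)
    assume "\<not> h b \<le> h a"
    then have pos: "h b - h a > 0" by simp
    let ?X = "C * (integral {a..b} w)\<^sup>2"
    obtain n where "?X / (h b - h a) < 2 ^ n"
      using real_arch_pow[of 2 "?X / (h b - h a)"] by auto
    then have "?X / 2 ^ n < h b - h a"
      using pos by (simp add: field_simps)
    then show False
      using dyadic[OF assms(5,6), of n] by simp
  qed
qed

lemma tendsto_Inf_if_antimono_bdd_below:
  fixes f :: "real \<Rightarrow> real"
  assumes antimono: "\<And>a b. t0 \<le> a \<Longrightarrow> a \<le> b \<Longrightarrow> f b \<le> f a"
    and bdd: "bdd_below (f ` {t0..})"
  shows "(f \<longlongrightarrow> Inf (f ` {t0..})) at_top"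
proof (rule decreasing_tendsto)
  show "\<forall>\<^sub>F t in at_top. Inf (f ` {t0..}) \<le> f t"
    using bdd by (auto intro!: cInf_lower eventually_mono[OF eventually_ge_at_top[of t0]])
next
  fix y assume "Inf (f ` {t0..}) < y"
  then obtain t1 where "t1 \<ge> t0" "f t1 < y"
    using cInf_lessD[of "f ` {t0..}" y] by auto
  then show "\<forall>\<^sub>F t in at_top. f t < y"
    using antimono by (auto intro!: eventually_mono[OF eventually_ge_at_top[of t1]] intro: le_less_trans)
qed

text \<open>The limit is the infimum \<open>l\<close> of the eventual upper bounds: a level \<open>p < l\<close> that is
  frequently undercut would, together with the frequent excursions above \<open>(p + l) / 2\<close>, be an
  oscillation.\<close>
lemma tendsto_if_bounded_no_oscillation:
  fixes f :: "real \<Rightarrow> real"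
  assumes bounded: "\<forall>\<^sub>F t in at_top. lo \<le> f t \<and> f t \<le> hi"
    and no_oscillation: "\<And>p q. p < q \<Longrightarrow> (\<forall>T. \<exists>t\<ge>T. f t < p) \<Longrightarrow> (\<forall>T. \<exists>t\<ge>T. f t > q) \<Longrightarrow> False"
  shows "\<exists>l. (f \<longlongrightarrow> l) at_top"
proof -
  define S where "S = {c. \<exists>T. \<forall>t\<ge>T. f t \<le> c}"
  obtain T0 where T0: "\<And>t. t \<ge> T0 \<Longrightarrow> lo \<le> f t \<and> f t \<le> hi"
    using bounded unfolding eventually_at_top_linorder by blast
  then have "hi \<in> S"
    unfolding S_def by auto
  have bdd: "bdd_below S"
    unfolding S_def bdd_below_def
  proof (intro exI[of _ lo] ballI)
    fix c assume "c \<in> {c. \<exists>T. \<forall>t\<ge>T. f t \<le> c}"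
    then obtain T where "\<forall>t\<ge>T. f t \<le> c" by auto
    then have "f (max T T0) \<le> c" by simp
    then show "lo \<le> c"
      using T0[of "max T T0"] by simp
  qed
  have "(f \<longlongrightarrow> Inf S) at_top"
  proof (rule order_tendstoI)
    fix a assume "Inf S < a"
    then obtain c T where "c < a" "\<forall>t\<ge>T. f t \<le> c"
      using cInf_lessD[of S a] \<open>hi \<in> S\<close> unfolding S_def by auto
    then show "\<forall>\<^sub>F t in at_top. f t < a"
      unfolding eventually_at_top_linorder by (meson le_less_trans)
  next
    fix p assume "p < Inf S"
    define q where "q = (p + Inf S) / 2"
    have "q \<notin> S"
      using cInf_lower[OF _ bdd, of q] \<open>p < Inf S\<close> unfolding q_def by force
    then have "\<forall>T. \<exists>t\<ge>T. f t > q"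
      unfolding S_def by (auto simp: not_le)
    moreover have "p < q"
      using \<open>p < Inf S\<close> unfolding q_def by simp
    ultimately have "\<not> (\<forall>T. \<exists>t\<ge>T. f t < (p + q) / 2)"
      using no_oscillation[of "(p + q) / 2" q] by auto
    then show "\<forall>\<^sub>F t in at_top. p < f t"
      unfolding eventually_at_top_linorder using \<open>p < q\<close> by (force simp: not_less)
  qed
  then show ?thesis by blast
qed

text \<open>If \<open>L\<close> is nonincreasing and \<open>M\<close>-Lipschitz from below, its second differences at step
  \<open>h = (q - p) / (M + 2)\<close> on the grid \<open>p + k h\<close> telescope to at most \<open>(M + 1) h\<close> over \<open>M + 1\<close>
  terms, so one of them is smaller than \<open>h\<close>.\<close>
lemma exists_small_second_difference:
  fixes L :: "real \<Rightarrow> real" and M :: nat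
  assumes antimono: "\<And>c c'. c \<le> c' \<Longrightarrow> L c' \<le> L c"
    and lipschitz: "\<And>c h. h \<ge> 0 \<Longrightarrow> L c \<le> L (c + h) + real M * h"
    and "p < q"
  obtains c h where "p < c" "c < q" "h > 0" "L (c - h) + L (c + h) - 2 * L c < h"
proof -
  define h where "h = (q - p) / (real M + 2)"
  have "h > 0"
    using \<open>p < q\<close> unfolding h_def by simp
  define E where "E k = L (p + real (Suc k) * h) - L (p + real k * h)" for k
  have "E (Suc M) \<le> 0"
    unfolding E_def using \<open>h > 0\<close> by (auto intro!: antimono)
  moreover have "- E 0 \<le> real M * h"
    unfolding E_def using lipschitz[of h p] \<open>h > 0\<close> by (simp add: add.commute)
  moreover have "(\<Sum>k=0..M. E (Suc k) - E k) = E (Suc M) - E 0"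
    by (rule sum_Suc_diff) simp
  ultimately have "(\<Sum>k=0..M. E (Suc k) - E k) < (\<Sum>k=0..M. h)"
    using \<open>h > 0\<close> by (simp add: algebra_simps)
  then obtain k where k: "k \<le> M" "E (Suc k) - E k < h"
    using sum_mono[of "{0..M}" "\<lambda>_. h" "\<lambda>k. E (Suc k) - E k"] by (force simp: not_less)
  show ?thesis
  proof
    show "p < p + real (Suc k) * h"
      using \<open>h > 0\<close> by simp
    have "real (Suc k) * h < (real M + 2) * h"
      using k(1) \<open>h > 0\<close> by (intro mult_strict_right_mono) auto
    also have "\<dots> = q - p"
      unfolding h_def by simp
    finally show "p + real (Suc k) * h < q"
      by simp
    show "L (p + real (Suc k) * h - h) + L (p + real (Suc k) * h + h) - 2 * L (p + real (Suc k) * h) < h"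
      using k(2) unfolding E_def by (simp add: algebra_simps)
  qed (fact \<open>h > 0\<close>)
qed

locale saturated_consensus =
  fixes N :: nat and s t0 :: real
    and \<alpha> :: "nat \<Rightarrow> nat \<Rightarrow> real \<Rightarrow> real"
    and x :: "nat \<Rightarrow> real \<Rightarrow> real"
  assumes s_pos: "s > 0" and t0_nonneg: "t0 \<ge> 0"
    and weights_sym: "\<And>i j t. i \<in> {1..N} \<Longrightarrow> j \<in> {1..N} \<Longrightarrow> t \<ge> 0 \<Longrightarrow>
      \<alpha> i j t = \<alpha> j i t \<and> \<alpha> i j t \<ge> 0"
    and flow_set_integrable: "\<And>i t. i \<in> {1..N} \<Longrightarrow> t \<ge> t0 \<Longrightarrow>
      set_integrable lborel {t0..t} (\<lambda>\<tau>. \<Sum>j=1..N. \<alpha> i j \<tau> * (sat s (x j \<tau>) - sat s (x i \<tau>)))"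
    and state_eq: "\<And>i t. i \<in> {1..N} \<Longrightarrow> t \<ge> t0 \<Longrightarrow>
      x i t = x i t0 + (LINT \<tau>:{t0..t}|lborel. (\<Sum>j=1..N. \<alpha> i j \<tau> * (sat s (x j \<tau>) - sat s (x i \<tau>))))"
begin

definition flow :: "nat \<Rightarrow> real \<Rightarrow> real" where
  "flow i \<tau> = (\<Sum>j=1..N. \<alpha> i j \<tau> * (sat s (x j \<tau>) - sat s (x i \<tau>)))"

definition speed :: "real \<Rightarrow> real" where
  "speed \<tau> = (\<Sum>i=1..N. \<bar>flow i \<tau>\<bar>)"

lemma flow_integrable:
  assumes "i \<in> {1..N}" "t0 \<le> a" "a \<le> b"
  shows "flow i integrable_on {a..b}" and "(\<lambda>\<tau>. \<bar>flow i \<tau>\<bar>) integrable_on {a..b}"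
proof -
  have "set_integrable lborel {a..b} (flow i)"
    using assms by (intro set_integrable_subset[OF flow_set_integrable[of i b, folded flow_def]]) auto
  then show "flow i integrable_on {a..b}" and "(\<lambda>\<tau>. \<bar>flow i \<tau>\<bar>) integrable_on {a..b}"
    using set_integrable_abs set_borel_integral_eq_integral(1) by blast+
qed

lemma speed_nonneg: "speed \<tau> \<ge> 0"
  unfolding speed_def by (intro sum_nonneg) auto

lemma speed_integrable: "t0 \<le> a \<Longrightarrow> a \<le> b \<Longrightarrow> speed integrable_on {a..b}"
  unfolding speed_def[abs_def] by (intro integrable_sum flow_integrable) auto

lemma state_increment:
  assumes i: "i \<in> {1..N}" and "t0 \<le> a" "a \<le> b"
  shows "x i b - x i a = integral {a..b} (flow i)"
proof -
  have integral_form: "x i t = x i t0 + integral {t0..t} (flow i)" if "t \<ge> t0" for t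
    using state_eq[OF i that, folded flow_def]
      set_borel_integral_eq_integral(2)[OF flow_set_integrable[OF i that, folded flow_def]]
    by simp
  have "integral {t0..a} (flow i) + integral {a..b} (flow i) = integral {t0..b} (flow i)"
    using assms by (intro Henstock_Kurzweil_Integration.integral_combine flow_integrable) auto
  then show ?thesis
    using integral_form[of a] integral_form[of b] assms by simp
qed

lemma state_continuous:
  assumes i: "i \<in> {1..N}" and "t0 \<le> b"
  shows "continuous_on {t0..b} (x i)"
proof -
  have "continuous_on {t0..b} (\<lambda>t. x i t0 + integral {t0..t} (flow i))"
    using assms by (intro continuous_intros indefinite_integral_continuous_1 flow_integrable) auto
  then show ?thesis
  proof (rule continuous_on_eq)
    fix t assume "t \<in> {t0..b}"
    then show "x i t0 + integral {t0..t} (flow i) = x i t"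
      using state_increment[OF i, of t0 t] by simp
  qed
qed

lemma state_dist_le_speed_integral:
  assumes i: "i \<in> {1..N}" and "t0 \<le> a" "a \<le> \<tau>" "\<tau> \<le> b"
  shows "\<bar>x i b - x i \<tau>\<bar> \<le> integral {a..b} speed"
proof -
  have "\<bar>x i b - x i \<tau>\<bar> = \<bar>integral {\<tau>..b} (flow i)\<bar>"
    using state_increment[OF i, of \<tau> b] assms by simp
  also have "\<dots> \<le> integral {\<tau>..b} (\<lambda>u. \<bar>flow i u\<bar>)"
    using Henstock_Kurzweil_Integration.integral_norm_bound_integral[OF flow_integrable[OF i, of \<tau> b]] assms
    by auto
  also have "\<dots> \<le> integral {a..b} (\<lambda>u. \<bar>flow i u\<bar>)"
    using assms by (intro integral_subset_le flow_integrable[OF i]) auto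
  also have "\<dots> \<le> integral {a..b} speed"
  proof (rule integral_le)
    show "(\<lambda>u. \<bar>flow i u\<bar>) integrable_on {a..b}" "speed integrable_on {a..b}"
      using assms by (auto intro: flow_integrable[OF i] speed_integrable)
    show "\<bar>flow i u\<bar> \<le> speed u" for u
      unfolding speed_def using i by (rule member_le_sum[where f = "\<lambda>i. \<bar>flow i u\<bar>"]) auto
  qed
  finally show ?thesis .
qed

text \<open>Since \<open>sat\<close> is monotone, \<open>d \<circ> x\<close> and \<open>sat \<circ> x\<close> are comonotone for monotone \<open>d\<close>.\<close>
lemma monotone_weighted_flow_nonpos:
  assumes mono: "\<And>u v. u \<le> v \<Longrightarrow> d u \<le> d v" and "\<tau> \<ge> 0"
  shows "(\<Sum>i=1..N. d (x i \<tau>) * flow i \<tau>) \<le> 0"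
  unfolding flow_def
proof (rule sum_mult_symmetric_diffusion_nonpos)
  fix i j
  show "0 \<le> (d (x i \<tau>) - d (x j \<tau>)) * (sat s (x i \<tau>) - sat s (x j \<tau>))"
    using mono sat_mono[of s] s_pos
    by (cases "x i \<tau> \<le> x j \<tau>") (auto intro: mult_nonpos_nonpos mult_nonneg_nonneg)
qed (use weights_sym \<open>\<tau> \<ge> 0\<close> in auto)

lemma weighted_flow_le:
  assumes mono: "\<And>u v. u \<le> v \<Longrightarrow> d u \<le> d v" and "K \<ge> 0"
    and lipschitz: "\<And>u v. \<bar>d u - d v\<bar> \<le> K * \<bar>u - v\<bar>"
    and "t0 \<le> a" "a \<le> \<tau>" "\<tau> \<le> b"
  shows "(\<Sum>i=1..N. d (x i b) * flow i \<tau>) \<le> K * integral {a..b} speed * speed \<tau>"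
proof -
  have "(\<Sum>i=1..N. d (x i b) * flow i \<tau>) =
        (\<Sum>i=1..N. d (x i \<tau>) * flow i \<tau>) + (\<Sum>i=1..N. (d (x i b) - d (x i \<tau>)) * flow i \<tau>)"
    by (simp add: sum.distrib[symmetric] algebra_simps)
  also have "(\<Sum>i=1..N. d (x i \<tau>) * flow i \<tau>) \<le> 0"
    using monotone_weighted_flow_nonpos[of d \<tau>, OF mono] t0_nonneg assms by simp
  also have "(\<Sum>i=1..N. (d (x i b) - d (x i \<tau>)) * flow i \<tau>) \<le>
             (\<Sum>i=1..N. K * integral {a..b} speed * \<bar>flow i \<tau>\<bar>)"
  proof (rule sum_mono)
    fix i assume i: "i \<in> {1..N}"
    have "(d (x i b) - d (x i \<tau>)) * flow i \<tau> \<le> \<bar>d (x i b) - d (x i \<tau>)\<bar> * \<bar>flow i \<tau>\<bar>"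
      by (metis abs_ge_self abs_mult)
    also have "\<dots> \<le> K * \<bar>x i b - x i \<tau>\<bar> * \<bar>flow i \<tau>\<bar>"
      using lipschitz by (intro mult_right_mono) auto
    also have "\<dots> \<le> K * integral {a..b} speed * \<bar>flow i \<tau>\<bar>"
      using state_dist_le_speed_integral[OF i] assms by (intro mult_right_mono mult_left_mono) auto
    finally show "(d (x i b) - d (x i \<tau>)) * flow i \<tau> \<le> K * integral {a..b} speed * \<bar>flow i \<tau>\<bar>" .
  qed
  also have "(\<Sum>i=1..N. K * integral {a..b} speed * \<bar>flow i \<tau>\<bar>) = K * integral {a..b} speed * speed \<tau>"
    unfolding speed_def by (simp add: sum_distrib_left)
  finally show ?thesis
    by simp
qed

lemma potential_increment_le:
  assumes mono: "\<And>u v. u \<le> v \<Longrightarrow> d u \<le> d v" and "K \<ge> 0"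
    and lipschitz: "\<And>u v. \<bar>d u - d v\<bar> \<le> K * \<bar>u - v\<bar>"
    and tangent: "\<And>u v. \<phi> v - \<phi> u \<le> d v * (v - u)"
    and ab: "t0 \<le> a" "a \<le> b"
  shows "(\<Sum>i=1..N. \<phi> (x i b)) - (\<Sum>i=1..N. \<phi> (x i a)) \<le> K * (integral {a..b} speed)\<^sup>2"
proof -
  have "(\<Sum>i=1..N. \<phi> (x i b)) - (\<Sum>i=1..N. \<phi> (x i a)) \<le> (\<Sum>i=1..N. d (x i b) * (x i b - x i a))"
    unfolding sum_subtractf[symmetric] using tangent by (intro sum_mono) auto
  also have "\<dots> = (\<Sum>i=1..N. integral {a..b} (\<lambda>\<tau>. d (x i b) * flow i \<tau>))"
    using ab by (intro sum.cong refl) (simp add: state_increment)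
  also have "\<dots> = integral {a..b} (\<lambda>\<tau>. \<Sum>i=1..N. d (x i b) * flow i \<tau>)"
    using ab by (intro integral_sum[symmetric] integrable_on_mult_right flow_integrable) auto
  also have "\<dots> \<le> integral {a..b} (\<lambda>\<tau>. K * integral {a..b} speed * speed \<tau>)"
    using ab weighted_flow_le[OF mono \<open>K \<ge> 0\<close> lipschitz ab(1)]
    by (intro integral_le integrable_sum integrable_on_mult_right flow_integrable speed_integrable) auto
  also have "\<dots> = K * (integral {a..b} speed)\<^sup>2"
    using ab by (simp add: speed_integrable power2_eq_square)
  finally show ?thesis .
qed

text \<open>This replaces the chain rule, which is not available for the merely absolutely continuous
  states: the Lipschitz slope bounds every increment quadratically, and dyadic refinement does
  the rest.\<close>
lemma potential_antimono:
  assumes "\<And>u v. u \<le> v \<Longrightarrow> d u \<le> d v" and "K \<ge> 0"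
    and "\<And>u v. \<bar>d u - d v\<bar> \<le> K * \<bar>u - v\<bar>"
    and "\<And>u v. \<phi> v - \<phi> u \<le> d v * (v - u)"
    and "t0 \<le> a" "a \<le> b"
  shows "(\<Sum>i=1..N. \<phi> (x i b)) \<le> (\<Sum>i=1..N. \<phi> (x i a))"
  by (rule antimono_if_increment_le_sq_integral[OF speed_integrable speed_nonneg assms(2)
        potential_increment_le[OF assms(1-4)] assms(5,6)])

lemma sum_state_const:
  assumes "t0 \<le> a" "a \<le> b"
  shows "(\<Sum>i=1..N. x i b) = (\<Sum>i=1..N. x i a)"
proof -
  have "(\<Sum>i=1..N. x i b) \<le> (\<Sum>i=1..N. x i a)"
    using potential_antimono[of "\<lambda>_. 1" 0 "\<lambda>z. z"] assms by simp
  moreover have "(\<Sum>i=1..N. - x i b) \<le> (\<Sum>i=1..N. - x i a)"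
    using potential_antimono[of "\<lambda>_. - 1" 0 uminus] assms by simp
  ultimately show ?thesis
    by (simp add: sum_negf)
qed

definition excess :: "real \<Rightarrow> real \<Rightarrow> real" where
  "excess c t = (\<Sum>i=1..N. max (x i t - c) 0)"

lemma excess_antimono:
  assumes "t0 \<le> a" "a \<le> b"
  shows "excess c b \<le> excess c a"
  unfolding excess_def
proof (rule field_le_epsilon)
  fix e :: real assume "e > 0"
  define \<epsilon> where "\<epsilon> = e / (real N + 1)"
  have "\<epsilon> > 0" "real N * \<epsilon> / 2 \<le> e"
    using \<open>e > 0\<close> by (auto simp: \<epsilon>_def field_simps)
  have "(\<Sum>i=1..N. max (x i b - c) 0) \<le> (\<Sum>i=1..N. smooth_pos \<epsilon> (x i b - c) + \<epsilon> / 2)"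
    using smooth_pos_approx(2)[OF \<open>\<epsilon> > 0\<close>] by (intro sum_mono) auto
  also have "\<dots> = (\<Sum>i=1..N. smooth_pos \<epsilon> (x i b - c)) + real N * \<epsilon> / 2"
    by (simp add: sum.distrib)
  also have "(\<Sum>i=1..N. smooth_pos \<epsilon> (x i b - c)) \<le> (\<Sum>i=1..N. smooth_pos \<epsilon> (x i a - c))"
  proof (rule potential_antimono[where d = "\<lambda>z. smooth_pos_slope \<epsilon> (z - c)" and K = "1 / \<epsilon>"])
    show "\<bar>smooth_pos_slope \<epsilon> (u - c) - smooth_pos_slope \<epsilon> (v - c)\<bar> \<le> 1 / \<epsilon> * \<bar>u - v\<bar>" for u v
      using smooth_pos_slope_lipschitz[OF \<open>\<epsilon> > 0\<close>, of "u - c" "v - c"] by simp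
    show "smooth_pos \<epsilon> (v - c) - smooth_pos \<epsilon> (u - c) \<le> smooth_pos_slope \<epsilon> (v - c) * (v - u)" for u v
      using smooth_pos_le_tangent[OF \<open>\<epsilon> > 0\<close>, of "v - c" "u - c"] by simp
  qed (use assms \<open>\<epsilon> > 0\<close> smooth_pos_slope_mono in auto)
  also have "(\<Sum>i=1..N. smooth_pos \<epsilon> (x i a - c)) \<le> (\<Sum>i=1..N. max (x i a - c) 0)"
    using smooth_pos_approx(1)[OF \<open>\<epsilon> > 0\<close>] by (intro sum_mono) auto
  finally show "(\<Sum>i=1..N. max (x i b - c) 0) \<le> (\<Sum>i=1..N. max (x i a - c) 0) + e"
    using \<open>real N * \<epsilon> / 2 \<le> e\<close> by simp
qed

text \<open>The deficit is the excess minus the conserved quantity \<open>\<Sum>i. x i - c\<close>.\<close>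
lemma deficit_antimono:
  assumes "t0 \<le> a" "a \<le> b"
  shows "(\<Sum>i=1..N. max (c - x i b) 0) \<le> (\<Sum>i=1..N. max (c - x i a) 0)"
proof -
  have "max (c - z) 0 = max (z - c) 0 - z + c" for z :: real
    by (simp add: max_def)
  then have deficit: "(\<Sum>i=1..N. max (c - x i t) 0) = (\<Sum>i=1..N. max (x i t - c) 0) - (\<Sum>i=1..N. x i t) + real N * c"
    for t
    by (simp add: sum.distrib sum_subtractf)
  show ?thesis
    unfolding deficit using excess_antimono[OF assms, unfolded excess_def] sum_state_const[OF assms]
    by simp
qed

lemma state_le_Max_initial:
  assumes "i \<in> {1..N}" "t \<ge> t0"
  shows "x i t \<le> Max ((\<lambda>j. x j t0) ` {1..N})"
proof -
  define M where "M = Max ((\<lambda>j. x j t0) ` {1..N})"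
  have "(\<Sum>j=1..N. max (x j t0 - M) 0) = 0"
    unfolding M_def by (intro sum.neutral) auto
  moreover have "max (x i t - M) 0 \<le> (\<Sum>j=1..N. max (x j t - M) 0)"
    using assms by (intro member_le_sum) auto
  ultimately show ?thesis
    using excess_antimono[OF order_refl \<open>t \<ge> t0\<close>, of M] unfolding excess_def M_def by simp
qed

lemma Min_initial_le_state:
  assumes "i \<in> {1..N}" "t \<ge> t0"
  shows "Min ((\<lambda>j. x j t0) ` {1..N}) \<le> x i t"
proof -
  define m where "m = Min ((\<lambda>j. x j t0) ` {1..N})"
  have "(\<Sum>j=1..N. max (m - x j t0) 0) = 0"
    unfolding m_def by (intro sum.neutral) auto
  moreover have "max (m - x i t) 0 \<le> (\<Sum>j=1..N. max (m - x j t) 0)"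
    using assms by (intro member_le_sum) auto
  ultimately show ?thesis
    using deficit_antimono[OF order_refl \<open>t \<ge> t0\<close>, of m] unfolding m_def by simp
qed

definition excess_limit :: "real \<Rightarrow> real" where
  "excess_limit c = Inf (excess c ` {t0..})"

lemma excess_tendsto: "(excess c \<longlongrightarrow> excess_limit c) at_top"
  unfolding excess_limit_def
  by (intro tendsto_Inf_if_antimono_bdd_below excess_antimono)
     (auto simp: excess_def intro!: bdd_belowI[where m = 0] sum_nonneg)

lemma excess_limit_antimono: "c \<le> c' \<Longrightarrow> excess_limit c' \<le> excess_limit c"
  by (intro tendsto_le[OF trivial_limit_at_top_linorder excess_tendsto excess_tendsto])
     (auto simp: excess_def intro!: always_eventually sum_mono)

lemma excess_limit_lipschitz:
  assumes "h \<ge> 0"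
  shows "excess_limit c \<le> excess_limit (c + h) + real N * h"
proof (rule tendsto_le[OF trivial_limit_at_top_linorder tendsto_add[OF excess_tendsto tendsto_const]
      excess_tendsto])
  have "excess c t \<le> (\<Sum>j=1..N. max (x j t - (c + h)) 0 + h)" for t
    unfolding excess_def using assms by (intro sum_mono) auto
  then show "\<forall>\<^sub>F t in at_top. excess c t \<le> excess (c + h) t + real N * h"
    by (simp add: excess_def sum.distrib)
qed

lemma state_no_oscillation:
  assumes i: "i \<in> {1..N}" and "p < q"
    and below: "\<forall>T. \<exists>t\<ge>T. x i t < p" and above: "\<forall>T. \<exists>t\<ge>T. x i t > q"
  shows False
proof -
  obtain c h where c: "p < c" "c < q" and "h > 0"
    and small: "excess_limit (c - h) + excess_limit (c + h) - 2 * excess_limit c < h"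
    by (rule exists_small_second_difference[of excess_limit N p q,
          OF excess_limit_antimono excess_limit_lipschitz \<open>p < q\<close>])
  have "((\<lambda>t. excess (c - h) t + excess (c + h) t - 2 * excess c t)
      \<longlongrightarrow> excess_limit (c - h) + excess_limit (c + h) - 2 * excess_limit c) at_top"
    by (intro tendsto_diff tendsto_add tendsto_mult_left excess_tendsto)
  from order_tendstoD(2)[OF this small]
  obtain T where T: "\<And>t. t \<ge> T \<Longrightarrow> excess (c - h) t + excess (c + h) t - 2 * excess c t < h"
    unfolding eventually_at_top_linorder by blast
  obtain t1 where t1: "max T t0 \<le> t1" "x i t1 < p"
    using below by blast
  obtain t2 where t2: "t1 \<le> t2" "x i t2 > q"
    using above by blast
  have "continuous_on {t1..t2} (x i)"
    using t1 t2 by (intro continuous_on_subset[OF state_continuous[OF i, of t2]]) auto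
  then obtain t where "t1 \<le> t" and t: "x i t = c"
    using IVT'[of "x i" t1 c t2] t1 t2 c by auto
  then have "T \<le> t"
    using t1 by simp
  have "h = max (x i t - (c - h)) 0 + max (x i t - (c + h)) 0 - 2 * max (x i t - c) 0"
    using t \<open>h > 0\<close> by simp
  also have "\<dots> \<le> (\<Sum>j=1..N. max (x j t - (c - h)) 0 + max (x j t - (c + h)) 0 - 2 * max (x j t - c) 0)"
    using i pos_part_second_difference_nonneg \<open>h > 0\<close>
    by (intro member_le_sum[where f = "\<lambda>j. max (x j t - (c - h)) 0 + max (x j t - (c + h)) 0 - 2 * max (x j t - c) 0"])
       auto
  also have "\<dots> = excess (c - h) t + excess (c + h) t - 2 * excess c t"
    by (simp add: excess_def sum.distrib sum_subtractf sum_distrib_left)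
  finally show False
    using T[OF \<open>T \<le> t\<close>] by simp
qed

lemma state_converges:
  assumes i: "i \<in> {1..N}"
  shows "\<exists>l. (x i \<longlongrightarrow> l) at_top \<and>
    Min ((\<lambda>j. x j t0) ` {1..N}) \<le> l \<and> l \<le> Max ((\<lambda>j. x j t0) ` {1..N})"
proof -
  have bounds: "\<forall>\<^sub>F t in at_top. Min ((\<lambda>j. x j t0) ` {1..N}) \<le> x i t \<and> x i t \<le> Max ((\<lambda>j. x j t0) ` {1..N})"
    unfolding eventually_at_top_linorder using i Min_initial_le_state state_le_Max_initial by blast
  have "\<exists>l. (x i \<longlongrightarrow> l) at_top"
    by (rule tendsto_if_bounded_no_oscillation[OF bounds]) (use state_no_oscillation[OF i] in blast)
  then obtain l where l: "(x i \<longlongrightarrow> l) at_top"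
    by blast
  have "Min ((\<lambda>j. x j t0) ` {1..N}) \<le> l" "l \<le> Max ((\<lambda>j. x j t0) ` {1..N})"
    using tendsto_lowerbound[OF l eventually_mono[OF bounds]] tendsto_upperbound[OF l eventually_mono[OF bounds]]
    by auto
  with l show ?thesis
    by blast
qed

end

theorem lemma5:
  fixes N :: nat and s t0 :: real
    and \<alpha> :: "nat \<Rightarrow> nat \<Rightarrow> real \<Rightarrow> real"
    and x :: "nat \<Rightarrow> real \<Rightarrow> real"
  assumes "N \<ge> 1" and "s > 0" and "t0 \<ge> 0"
    and sym: "\<forall>i\<in>{1..N}. \<forall>j\<in>{1..N}. \<forall>t\<ge>0. \<alpha> i j t = \<alpha> j i t \<and> \<alpha> i j t \<ge> 0"
    and cont: "\<forall>i\<in>{1..N}. \<forall>j\<in>{1..N}. \<exists>Z. Z \<in> null_sets lborel \<and>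
                 (\<forall>t\<in>{0..} - Z. continuous (at t within {0..}) (\<alpha> i j))"
    and sol: "\<forall>i\<in>{1..N}. \<forall>t\<ge>t0.
       set_integrable lborel {t0..t}
         (\<lambda>\<tau>. \<Sum>j=1..N. \<alpha> i j \<tau> * (sat s (x j \<tau>) - sat s (x i \<tau>))) \<and>
       x i t = x i t0 +
         (LINT \<tau>:{t0..t}|lborel. (\<Sum>j=1..N. \<alpha> i j \<tau> * (sat s (x j \<tau>) - sat s (x i \<tau>))))"
  shows "\<forall>i\<in>{1..N}. \<exists>xs. (x i \<longlongrightarrow> xs) at_top \<and>
           Min ((\<lambda>j. x j t0) ` {1..N}) \<le> xs \<and> xs \<le> Max ((\<lambda>j. x j t0) ` {1..N})"
proof -
  interpret saturated_consensus N s t0 \<alpha> x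
    using \<open>s > 0\<close> \<open>t0 \<ge> 0\<close> sym sol by unfold_locales blast+
  show ?thesis
    using state_converges by blast
qed

end
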